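(* Let $m\ge 2$ be an integer, and let $A\ge 1$, $B\ge 0$, $C\ge 1$ be integers such that $p(An+B)\equiv 0 \pmod{C}$ for all integers $n\ge 0$. If $B<A$ and $A\mid m$, then for every positive integer $k$ and every integer $n\ge 0$, $$p_{\rho,m}(An+B,k)\equiv 0 \pmod{C}.$$
   Context: $p(n)$ denotes the number of partitions of $n$. Part-frequency matrices: fix an integer modulus $m\ge 2$. Every positive integer $N$ can be written uniquely as $N=jm^k$ with $k\ge 0$ and $m\nmid j$. For a partition $\lambda$, write the number of times the part $N$ occurs in base $m$ as $\sum_{\ell\ge 0} a_{N,\ell}m^\ell$ with digits $a_{N,\ell}\in\{0,\dots,m-1\}$. For each $j\ge 1$ with $m\nmid j$, let $M_j$ be the infinite matrix, with rows and columns indexed from $0$, whose entry in row $k$, column $\ell$ is $a_{jm^k,\ell}$. The partition is recovered from the sequence $(M_j)$; an entry $a$ at position $(k,\ell)$ of $M_j$ contributes $a\cdot j\cdot m^{k+\ell}$ to the weight of the partition, so entries on the same antidiagonal $k+\ell=\text{const}$ contribute in the same unit. The map $\rho$ (depending on $m$): apply to every matrix $M_j$ the following rotation of each antidiagonal. The entry at position $(k,\ell)$ with $\ell\ge 1$ moves to position $(k+1,\ell-1)$, and the entry at position $(k,0)$ moves to position $(0,k)$. The resulting sequence of matrices defines a new partition of the same integer, so $\rho$ is a permutation of the finite set of partitions of $n$. The orbit size of a partition is the size of its orbit under $\rho$. $p_{\rho,m}(n,k)$ denotes the number of partitions of $n$ lying in orbits of size $k$ under $\rho$ with modulus $m$.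 *)

theory Defs
  imports Main
begin

text \<open>Partitions of n, represented by multiplicity functions: f i = number of times part i occurs.\<close>
definition partitions :: "nat \<Rightarrow> (nat \<Rightarrow> nat) set" where
  "partitions n = {f. (\<forall>i. f i \<noteq> 0 \<longrightarrow> 0 < i \<and> i \<le> n) \<and> (\<Sum>i=1..n. i * f i) = n}"

definition p :: "nat \<Rightarrow> nat" where
  "p n = card (partitions n)"

text \<open>The m-adic exponent k of N = j m^k with m not dividing j (N > 0, m >= 2).\<close>
definition mexp :: "nat \<Rightarrow> nat \<Rightarrow> nat" where
  "mexp m N = (GREATEST k. m ^ k dvd N)"

definition mpart :: "nat \<Rightarrow> nat \<Rightarrow> nat" where
  "mpart m N = N div m ^ mexp m N"

definition digit :: "nat \<Rightarrow> nat \<Rightarrow> nat \<Rightarrow> nat" where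
  "digit m x l = x div m ^ l mod m"

definition pfmat :: "nat \<Rightarrow> (nat \<Rightarrow> nat) \<Rightarrow> nat \<Rightarrow> nat \<Rightarrow> nat \<Rightarrow> nat" where
  "pfmat m f j k l = digit m (f (j * m ^ k)) l"

text \<open>Antidiagonal rotation: (k,l) with l>=1 moves to (k+1,l-1), (k,0) moves to (0,k).
  So the new entry at (k',l') is the old entry at (l',0) if k'=0, and at (k'-1,l'+1) otherwise.\<close>
definition rotmat :: "(nat \<Rightarrow> nat \<Rightarrow> nat) \<Rightarrow> nat \<Rightarrow> nat \<Rightarrow> nat" where
  "rotmat M k l = (if k = 0 then M l 0 else M (k - 1) (l + 1))"

text \<open>Recover multiplicities from the sequence of matrices (indexed by j with m not dividing j).\<close>
definition frommats :: "nat \<Rightarrow> (nat \<Rightarrow> nat \<Rightarrow> nat \<Rightarrow> nat) \<Rightarrow> nat \<Rightarrow> nat" where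
  "frommats m Ms N = (if N = 0 then 0 else
     (let j = mpart m N; k = mexp m N in \<Sum>l\<in>{l. Ms j k l \<noteq> 0}. Ms j k l * m ^ l))"

definition rho :: "nat \<Rightarrow> (nat \<Rightarrow> nat) \<Rightarrow> (nat \<Rightarrow> nat)" where
  "rho m f = frommats m (\<lambda>j. rotmat (pfmat m f j))"

definition orbit_size :: "nat \<Rightarrow> (nat \<Rightarrow> nat) \<Rightarrow> nat" where
  "orbit_size m f = card {(rho m ^^ i) f | i. True}"

definition p_rho :: "nat \<Rightarrow> nat \<Rightarrow> nat \<Rightarrow> nat" where
  "p_rho m n k = card {f \<in> partitions n. orbit_size m f = k}"

end

theory Submission
  imports Defs "HOL-Library.Function_Algebras"
begin

text \<open>
  The entry (0,0) of a matrix M_j is the last base-m digit of the multiplicity of the part j,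
  where m does not divide j; \<open>\<rho>\<close> fixes it and moves all other entries among themselves.
  Splitting off these digits writes every partition uniquely as u + g, where u has
  multiplicities below m on parts prime to m and g has multiplicities divisible by m there.
  Then \<open>\<rho>(u + g) = u + \<rho>(g)\<close>, so the orbit size depends only on g, and g is a partition of a
  multiple r of m. With G_r and U_s the sets of such g and u of weights r and s
  (divisible_partitions m r and residue_partitions m s below), counting
  pairs gives p(n) = \<Sum> |G_r| |U_(n-r)| and p_\<rho>(n,k) = \<Sum> |G_r with orbits of size k| |U_(n-r)|,
  where r runs over multiples of m, hence of A, so n - r stays in the progression A t + B.
  Since |G_0| = 1, the first identity and induction on n show that C divides every
  |U_(A n + B)|; the second identity then gives the theorem.
\<close>

lemma sum_digits_lessThan:
  fixes m y :: nat
  shows "(\<Sum>l<K. y div m ^ l mod m * m ^ l) = y mod m ^ K"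
proof (induction K)
  case (Suc K)
  have "y mod (m ^ K * m) = m ^ K * (y div m ^ K mod m) + y mod m ^ K"
    by (rule mod_mult2_eq)
  with Suc show ?case
    by (simp add: mult.commute)
qed simp

lemma exponent_less_power:
  fixes m n :: nat
  assumes "2 \<le> m"
  shows "n < m ^ n"
proof -
  have "n < 2 ^ n" by simp
  also have "\<dots> \<le> m ^ n" using assms by (simp add: power_mono)
  finally show ?thesis .
qed

lemma sum_nonzero_eq_sum_lessThan:
  fixes g :: "nat \<Rightarrow> nat"
  assumes "\<And>l. K \<le> l \<Longrightarrow> g l = 0"
  shows "(\<Sum>l\<in>{l. g l \<noteq> 0}. g l * c l) = (\<Sum>l<K. g l * c l)"
proof (rule sum.mono_neutral_left)
  show "{l. g l \<noteq> 0} \<subseteq> {..<K}"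
    using assms not_less by blast
qed auto

lemma digit_expansion:
  fixes m y :: nat
  assumes "2 \<le> m"
  shows "(\<Sum>l\<in>{l. y div m ^ l mod m \<noteq> 0}. y div m ^ l mod m * m ^ l) = y"
proof -
  have "y div m ^ l mod m = 0" if "y \<le> l" for l
  proof -
    have "y < m ^ y" using exponent_less_power[OF assms] .
    also have "\<dots> \<le> m ^ l" using that assms by (simp add: power_increasing)
    finally show ?thesis by simp
  qed
  then have "(\<Sum>l\<in>{l. y div m ^ l mod m \<noteq> 0}. y div m ^ l mod m * m ^ l)
      = (\<Sum>l<y. y div m ^ l mod m * m ^ l)"
    by (rule sum_nonzero_eq_sum_lessThan)
  also have "\<dots> = y mod m ^ y"
    by (rule sum_digits_lessThan)
  also have "\<dots> = y"
    using exponent_less_power[OF assms, of y] by simp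
  finally show ?thesis .
qed

lemma
  fixes m N :: nat
  assumes "2 \<le> m" and "0 < N"
  shows mexp_dvd: "m ^ mexp m N dvd N"
    and not_power_Suc_mexp_dvd: "\<not> m ^ Suc (mexp m N) dvd N"
proof -
  have bounded: "k \<le> N" if "m ^ k dvd N" for k
    using exponent_less_power[OF assms(1), of k] dvd_imp_le[OF that assms(2)] by simp
  show "m ^ mexp m N dvd N"
    unfolding mexp_def by (rule GreatestI_nat[of _ 0]) (use bounded in auto)
  show "\<not> m ^ Suc (mexp m N) dvd N"
    unfolding mexp_def using Greatest_le_nat[of "\<lambda>k. m ^ k dvd N" _ N] bounded
    by (metis Suc_n_not_le_n)
qed

lemma
  fixes m N :: nat
  assumes "2 \<le> m" and "0 < N"
  shows mpart_times_power_mexp: "mpart m N * m ^ mexp m N = N"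
    and not_dvd_mpart: "\<not> m dvd mpart m N"
proof -
  show eq: "mpart m N * m ^ mexp m N = N"
    unfolding mpart_def using mexp_dvd[OF assms] by simp
  show "\<not> m dvd mpart m N"
  proof
    assume "m dvd mpart m N"
    then have "m ^ Suc (mexp m N) dvd N"
      by (metis eq mult.commute mult_dvd_mono power_Suc dvd_refl)
    with not_power_Suc_mexp_dvd[OF assms] show False ..
  qed
qed

lemma rho_zero [simp]: "rho m f 0 = 0"
  by (simp add: rho_def frommats_def)

lemma rho_eq_rotmat:
  "N \<noteq> 0 \<Longrightarrow> rho m f N = (let M = rotmat (pfmat m f (mpart m N)) (mexp m N)
     in \<Sum>l\<in>{l. M l \<noteq> 0}. M l * m ^ l)"
  by (simp add: rho_def frommats_def Let_def)

text \<open>For \<open>m \<nmid> N\<close> the new row 0 of \<open>M\<^sub>N\<close> is its old column 0; a row \<open>k \<ge> 1\<close> is the previous row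
  shifted by one digit.\<close>

lemma rho_not_dvd:
  fixes m N :: nat
  assumes "2 \<le> m" and "\<not> m dvd N" and "\<And>i. K \<le> i \<Longrightarrow> f i = 0"
  shows "rho m f N = (\<Sum>l<K. f (N * m ^ l) mod m * m ^ l)"
proof -
  have N: "0 < N" using assms(2) by (auto intro: Nat.gr0I)
  have "mexp m N = 0"
    using mpart_times_power_mexp[OF assms(1) N] assms(2) by (metis dvd_mult dvd_power dvd_triv_right gr0I)
  moreover have "mpart m N = N"
    using mpart_times_power_mexp[OF assms(1) N] calculation by simp
  ultimately have "rho m f N = (\<Sum>l\<in>{l. f (N * m ^ l) mod m \<noteq> 0}. f (N * m ^ l) mod m * m ^ l)"
    using N by (simp add: rho_eq_rotmat rotmat_def pfmat_def digit_def)
  also have "\<dots> = (\<Sum>l<K. f (N * m ^ l) mod m * m ^ l)"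
  proof (rule sum_nonzero_eq_sum_lessThan)
    fix l assume "K \<le> l"
    moreover have "l < N * m ^ l"
      using exponent_less_power[OF assms(1), of l] N by (simp add: less_le_trans)
    ultimately show "f (N * m ^ l) mod m = 0" using assms(3) by simp
  qed
  finally show ?thesis .
qed

lemma rho_dvd:
  fixes m N :: nat
  assumes "2 \<le> m" and "m dvd N" and "N \<noteq> 0"
  shows "rho m f N = f (N div m) div m"
proof -
  have N: "0 < N" using assms(3) by simp
  define j k where "j = mpart m N" and "k = mexp m N"
  have N_eq: "N = j * m ^ k" and "\<not> m dvd j"
    using mpart_times_power_mexp[OF assms(1) N] not_dvd_mpart[OF assms(1) N] by (simp_all add: j_def k_def)
  then obtain k' where k: "k = Suc k'"
    using assms(2) by (cases k) auto
  have "rho m f N = (\<Sum>l\<in>{l. f (j * m ^ k') div m div m ^ l mod m \<noteq> 0}.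
      f (j * m ^ k') div m div m ^ l mod m * m ^ l)"
    unfolding rho_eq_rotmat[OF assms(3)] j_def[symmetric] k_def[symmetric] k
    by (simp add: rotmat_def pfmat_def digit_def div_mult2_eq)
  also have "\<dots> = f (j * m ^ k') div m"
    by (rule digit_expansion[OF assms(1)])
  also have "j * m ^ k' = N div m"
    using N_eq k assms(1) by simp
  finally show ?thesis .
qed

text \<open>\<open>residue_part m f\<close> collects the (0,0) entries of all matrices \<open>M\<^sub>j\<close>; \<open>divisible_part m f\<close>
  collects all the other entries.\<close>

definition residue_part :: "nat \<Rightarrow> (nat \<Rightarrow> nat) \<Rightarrow> nat \<Rightarrow> nat" where
  "residue_part m f j = (if m dvd j then 0 else f j mod m)"

definition divisible_part :: "nat \<Rightarrow> (nat \<Rightarrow> nat) \<Rightarrow> nat \<Rightarrow> nat" where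
  "divisible_part m f = f - residue_part m f"

definition is_residue_part :: "nat \<Rightarrow> (nat \<Rightarrow> nat) \<Rightarrow> bool" where
  "is_residue_part m u \<longleftrightarrow> (\<forall>j. u j < m \<and> (m dvd j \<longrightarrow> u j = 0))"

definition is_divisible_part :: "nat \<Rightarrow> (nat \<Rightarrow> nat) \<Rightarrow> bool" where
  "is_divisible_part m g \<longleftrightarrow> (\<forall>j. \<not> m dvd j \<longrightarrow> m dvd g j)"

lemma residue_part_le: "residue_part m f j \<le> f j"
  by (simp add: residue_part_def)

lemma divisible_part_le: "divisible_part m f j \<le> f j"
  by (simp add: divisible_part_def)

lemma residue_part_plus_divisible_part: "residue_part m f + divisible_part m f = f"
  by (rule ext) (simp add: divisible_part_def residue_part_le)

lemma is_residue_part_residue_part: "0 < m \<Longrightarrow> is_residue_part m (residue_part m f)"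
  by (simp add: is_residue_part_def residue_part_def)

lemma is_divisible_part_divisible_part: "is_divisible_part m (divisible_part m f)"
  by (simp add: is_divisible_part_def divisible_part_def residue_part_def minus_mod_eq_mult_div)

lemma residue_part_add:
  assumes "is_residue_part m u" and "is_divisible_part m g"
  shows "residue_part m (u + g) = u"
proof
  fix j
  show "residue_part m (u + g) j = u j"
  proof (cases "m dvd j")
    case False
    then obtain c where "g j = m * c"
      using assms(2) by (auto simp: is_divisible_part_def)
    with False assms(1) show ?thesis
      by (simp add: residue_part_def is_residue_part_def)
  qed (use assms(1) in \<open>simp add: residue_part_def is_residue_part_def\<close>)
qed

lemma divisible_part_add:
  "is_residue_part m u \<Longrightarrow> is_divisible_part m g \<Longrightarrow> divisible_part m (u + g) = g"
  by (simp add: divisible_part_def residue_part_add fun_eq_iff)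

lemma rho_add_residue_part:
  assumes m: "2 \<le> m" and u: "is_residue_part m u" and g: "is_divisible_part m g"
    and "\<forall>\<^sub>F i in sequentially. u i = 0" and "\<forall>\<^sub>F i in sequentially. g i = 0"
  shows "rho m (u + g) = u + rho m g"
proof
  fix N
  obtain K where u0: "\<And>i. K \<le> i \<Longrightarrow> u i = 0" and g0: "\<And>i. K \<le> i \<Longrightarrow> g i = 0"
    using eventually_conj[OF assms(4,5)] by (auto simp: eventually_sequentially)
  have u_dvd: "u j = 0" if "m dvd j" for j
    using u that by (simp add: is_residue_part_def)
  consider "N = 0" | "m dvd N" "N \<noteq> 0" | "\<not> m dvd N" by blast
  then show "rho m (u + g) N = (u + rho m g) N"
  proof cases
    case 1
    then show ?thesis by (simp add: u_dvd)
  next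
    case 2
    have "(u (N div m) + g (N div m)) div m = g (N div m) div m"
    proof (cases "m dvd N div m")
      case False
      then obtain c where "g (N div m) = m * c"
        using g by (auto simp: is_divisible_part_def)
      with u show ?thesis by (simp add: is_residue_part_def)
    qed (simp add: u_dvd)
    with 2 show ?thesis by (simp add: rho_dvd[OF m] u_dvd)
  next
    case 3
    obtain c where gN: "g N = m * c"
      using g 3 by (auto simp: is_divisible_part_def)
    have uN: "u N < m"
      using u by (simp add: is_residue_part_def)
    have "rho m (u + g) N = (\<Sum>l<Suc K. (u + g) (N * m ^ l) mod m * m ^ l)"
      using 3 u0 g0 by (intro rho_not_dvd[OF m]) auto
    also have "\<dots> = u N + (\<Sum>l<K. g (N * m ^ Suc l) mod m * m ^ Suc l)"
      unfolding sum.lessThan_Suc_shift using gN uN by (simp add: u_dvd)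
    also have "\<dots> = u N + (\<Sum>l<Suc K. g (N * m ^ l) mod m * m ^ l)"
      unfolding sum.lessThan_Suc_shift using gN by simp
    also have "(\<Sum>l<Suc K. g (N * m ^ l) mod m * m ^ l) = rho m g N"
      using 3 g0 by (intro rho_not_dvd[symmetric, OF m]) auto
    finally show ?thesis by (simp add: plus_fun_def)
  qed
qed

lemma is_divisible_part_rho:
  assumes m: "2 \<le> m" and g: "is_divisible_part m g" and "\<forall>\<^sub>F i in sequentially. g i = 0"
  shows "is_divisible_part m (rho m g)"
  unfolding is_divisible_part_def
proof (intro allI impI)
  fix N assume N: "\<not> m dvd N"
  obtain K where g0: "\<And>i. K \<le> i \<Longrightarrow> g i = 0"
    using assms(3) by (auto simp: eventually_sequentially)
  have "rho m g N = (\<Sum>l<Suc K. g (N * m ^ l) mod m * m ^ l)"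
    using N g0 by (intro rho_not_dvd[OF m]) auto
  also have "\<dots> = (\<Sum>l<K. g (N * m ^ Suc l) mod m * m ^ Suc l)"
    unfolding sum.lessThan_Suc_shift using g N by (simp add: is_divisible_part_def)
  finally show "m dvd rho m g N"
    by (simp add: dvd_sum)
qed

lemma eventually_rho_eq_0:
  assumes m: "2 \<le> m" and "\<forall>\<^sub>F i in sequentially. g i = 0"
  shows "\<forall>\<^sub>F N in sequentially. rho m g N = 0"
proof -
  obtain K where g0: "\<And>i. K \<le> i \<Longrightarrow> g i = 0"
    using assms(2) by (auto simp: eventually_sequentially)
  have "rho m g N = 0" if N: "m * K \<le> N" for N
  proof (cases "m dvd N")
    case True
    then obtain c where c: "N = m * c" ..
    with N m have "K \<le> c" by simp
    with c g0 m show ?thesis by (cases "c = 0") (simp_all add: rho_dvd)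
  next
    case False
    have "K \<le> N * m ^ l" for l
    proof -
      have "K \<le> m * K" using m by simp
      also have "\<dots> \<le> N * m ^ l" using N m by (simp add: le_trans)
      finally show ?thesis .
    qed
    with False g0 show ?thesis by (simp add: rho_not_dvd[OF m False g0])
  qed
  then show ?thesis by (auto simp: eventually_sequentially)
qed

lemma funpow_rho_preserves_divisible_part:
  assumes "2 \<le> m" and "is_divisible_part m g" and "\<forall>\<^sub>F i in sequentially. g i = 0"
  shows "is_divisible_part m ((rho m ^^ n) g) \<and> (\<forall>\<^sub>F i in sequentially. (rho m ^^ n) g i = 0)"
  by (induction n) (simp_all add: assms is_divisible_part_rho eventually_rho_eq_0)

lemma funpow_rho_add_residue_part:
  assumes m: "2 \<le> m" and u: "is_residue_part m u" and g: "is_divisible_part m g"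
    and "\<forall>\<^sub>F i in sequentially. u i = 0" and "\<forall>\<^sub>F i in sequentially. g i = 0"
  shows "(rho m ^^ n) (u + g) = u + (rho m ^^ n) g"
proof (induction n)
  case (Suc n)
  have "(rho m ^^ Suc n) (u + g) = rho m (u + (rho m ^^ n) g)"
    by (simp only: funpow.simps comp_apply Suc.IH)
  also have "\<dots> = u + (rho m ^^ Suc n) g"
    using funpow_rho_preserves_divisible_part[OF m g assms(5), of n] rho_add_residue_part[OF m u _ assms(4)] by simp
  finally show ?case .
qed simp

lemma orbit_size_add_residue_part:
  assumes "2 \<le> m" and "is_residue_part m u" and "is_divisible_part m g"
    and "\<forall>\<^sub>F i in sequentially. u i = 0" and "\<forall>\<^sub>F i in sequentially. g i = 0"
  shows "orbit_size m (u + g) = orbit_size m g"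
proof -
  have "{(rho m ^^ n) (u + g) | n. True} = (+) u ` {(rho m ^^ n) g | n. True}"
    using funpow_rho_add_residue_part[OF assms] by auto
  then show ?thesis
    unfolding orbit_size_def by (simp add: card_image)
qed

lemma orbit_size_divisible_part:
  assumes "2 \<le> m" and f: "\<forall>\<^sub>F i in sequentially. f i = 0"
  shows "orbit_size m f = orbit_size m (divisible_part m f)"
proof -
  have "\<forall>\<^sub>F i in sequentially. residue_part m f i = 0"
    and "\<forall>\<^sub>F i in sequentially. divisible_part m f i = 0"
    by (rule eventually_mono[OF f], metis le_0_eq residue_part_le divisible_part_le)+
  with assms(1) have "orbit_size m (residue_part m f + divisible_part m f) = orbit_size m (divisible_part m f)"
    by (intro orbit_size_add_residue_part is_residue_part_residue_part is_divisible_part_divisible_part) auto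
  then show ?thesis
    by (simp only: residue_part_plus_divisible_part)
qed

lemma partitionsI:
  "(\<And>i. f i \<noteq> 0 \<Longrightarrow> 0 < i \<and> i \<le> n) \<Longrightarrow> (\<Sum>i=1..n. i * f i) = n \<Longrightarrow> f \<in> partitions n"
  unfolding partitions_def by blast

lemma partitions_support: "f \<in> partitions n \<Longrightarrow> f i \<noteq> 0 \<Longrightarrow> 0 < i \<and> i \<le> n"
  unfolding partitions_def by blast

lemma partitions_eventually_zero:
  assumes "f \<in> partitions n"
  shows "\<forall>\<^sub>F i in sequentially. f i = 0"
  unfolding eventually_sequentially
proof (intro exI allI impI)
  fix i assume "Suc n \<le> i"
  with partitions_support[OF assms, of i] show "f i = 0" by auto
qed

lemma sum_partitions_extend:
  assumes "f \<in> partitions r" and "r \<le> N"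
  shows "(\<Sum>i=1..N. i * f i) = r"
proof -
  have "(\<Sum>i=1..N. i * f i) = (\<Sum>i=1..r. i * f i)"
    using assms unfolding partitions_def by (intro sum.mono_neutral_right) auto
  with assms(1) show ?thesis by (simp add: partitions_def)
qed

lemma partitions_unique: "f \<in> partitions r \<Longrightarrow> f \<in> partitions s \<Longrightarrow> r = s"
  using sum_partitions_extend[of f r "max r s"] sum_partitions_extend[of f s "max r s"] by simp

lemma mem_partitions_weight:
  assumes supp: "\<And>i. f i \<noteq> 0 \<Longrightarrow> 0 < i \<and> i \<le> n"
  shows "f \<in> partitions (\<Sum>i=1..n. i * f i)"
proof -
  define w where "w = (\<Sum>i=1..n. i * f i)"
  have le_w: "i \<le> w" if "f i \<noteq> 0" for i
  proof -
    have "i \<le> i * f i" using that by simp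
    also have "\<dots> \<le> w" unfolding w_def using supp[OF that] by (intro member_le_sum) auto
    finally show ?thesis .
  qed
  have zero_beyond: "f i = 0" if "n < i \<or> w < i" for i
    using supp le_w that not_le by blast
  have "(\<Sum>i=1..w. i * f i) = (\<Sum>i=1..min n w. i * f i)"
    using zero_beyond by (intro sum.mono_neutral_right) auto
  also have "\<dots> = (\<Sum>i=1..n. i * f i)"
    using zero_beyond by (intro sum.mono_neutral_left) auto
  finally show ?thesis
    using supp le_w unfolding w_def[symmetric] by (intro partitionsI) auto
qed

lemma partitions_add:
  assumes f: "f \<in> partitions r" and g: "g \<in> partitions s"
  shows "f + g \<in> partitions (r + s)"
proof (rule partitionsI)
  fix i assume "(f + g) i \<noteq> 0"
  then have "f i \<noteq> 0 \<or> g i \<noteq> 0" by simp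
  with partitions_support[OF f, of i] partitions_support[OF g, of i] show "0 < i \<and> i \<le> r + s"
    by auto
next
  have "(\<Sum>i=1..r+s. i * (f + g) i) = (\<Sum>i=1..r+s. i * f i) + (\<Sum>i=1..r+s. i * g i)"
    by (simp add: algebra_simps sum.distrib)
  also have "\<dots> = r + s"
    using sum_partitions_extend[OF f] sum_partitions_extend[OF g] by simp
  finally show "(\<Sum>i=1..r+s. i * (f + g) i) = r + s" .
qed

lemma partitions_split:
  assumes f: "f \<in> partitions n" and le: "\<And>i. g i \<le> f i"
  shows "\<exists>r\<le>n. g \<in> partitions r \<and> f - g \<in> partitions (n - r)"
proof (intro exI conjI)
  have supp_f: "0 < i \<and> i \<le> n" if "f i \<noteq> 0" for i
    using partitions_support[OF f] that .
  have sum_f: "(\<Sum>i=1..n. i * f i) = n"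
    using sum_partitions_extend[OF f order_refl] .
  define r where "r = (\<Sum>i=1..n. i * g i)"
  show "g \<in> partitions r"
  proof (unfold r_def, rule mem_partitions_weight)
    show "0 < i \<and> i \<le> n" if "g i \<noteq> 0" for i
      using supp_f le[of i] that by simp
  qed
  have "r \<le> (\<Sum>i=1..n. i * f i)"
    unfolding r_def using le by (simp add: sum_mono)
  with sum_f show "r \<le> n" by simp
  have "(\<Sum>i=1..n. i * (f - g) i) = (\<Sum>i=1..n. i * f i) - r"
    unfolding r_def using le by (simp add: diff_mult_distrib2 sum_subtractf_nat)
  with sum_f have "(\<Sum>i=1..n. i * (f - g) i) = n - r" by simp
  moreover have "f - g \<in> partitions (\<Sum>i=1..n. i * (f - g) i)"
  proof (rule mem_partitions_weight)
    show "0 < i \<and> i \<le> n" if "(f - g) i \<noteq> 0" for i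
      using supp_f that by simp
  qed
  ultimately show "f - g \<in> partitions (n - r)"
    by simp
qed

lemma finite_partitions: "finite (partitions n)"
proof (rule finite_subset)
  show "partitions n \<subseteq> {f. \<forall>i. (i \<in> {0..n} \<longrightarrow> f i \<in> {0..n}) \<and> (i \<notin> {0..n} \<longrightarrow> f i = 0)}"
  proof safe
    fix f i assume f: "f \<in> partitions n"
    show "f i = 0" if "i \<notin> {0..n}"
      using partitions_support[OF f, of i] that by auto
    show "f i \<in> {0..n}"
    proof (cases "f i = 0")
      case False
      then have i: "0 < i" "i \<le> n" using partitions_support[OF f] by auto
      have "f i \<le> i * f i" using i by simp
      also have "\<dots> \<le> (\<Sum>i=1..n. i * f i)" using i by (intro member_le_sum) auto
      also have "\<dots> = n" using sum_partitions_extend[OF f order_refl] .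
      finally show ?thesis by simp
    qed simp
  qed
qed (intro finite_set_of_finite_funs finite_atLeastAtMost)

lemma partitions_0: "partitions 0 = {0}"
  unfolding partitions_def by (auto simp: fun_eq_iff)

definition divisible_partitions :: "nat \<Rightarrow> nat \<Rightarrow> (nat \<Rightarrow> nat) set" where
  "divisible_partitions m r = {g \<in> partitions r. is_divisible_part m g}"

definition residue_partitions :: "nat \<Rightarrow> nat \<Rightarrow> (nat \<Rightarrow> nat) set" where
  "residue_partitions m s = {u \<in> partitions s. is_residue_part m u}"

lemma residue_divisible_decomposition_unique:
  assumes "is_residue_part m u" "is_divisible_part m g" "is_residue_part m u'" "is_divisible_part m g'"
    and "u + g = u' + g'"
  shows "u = u'" and "g = g'"
proof -
  have "residue_part m (u + g) = residue_part m (u' + g')"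
    and "divisible_part m (u + g) = divisible_part m (u' + g')"
    using assms(5) by simp_all
  with assms(1-4) show "u = u'" and "g = g'"
    by (simp_all add: residue_part_add divisible_part_add)
qed

lemma partitions_decompose:
  assumes "2 \<le> m" and f: "f \<in> partitions n"
  shows "\<exists>r\<le>n. divisible_part m f \<in> divisible_partitions m r
    \<and> residue_part m f \<in> residue_partitions m (n - r)"
proof -
  obtain r where "r \<le> n" and "divisible_part m f \<in> partitions r"
    and "f - divisible_part m f \<in> partitions (n - r)"
    using partitions_split[OF f, of "divisible_part m f"] divisible_part_le by blast
  moreover have "f - divisible_part m f = residue_part m f"
    by (metis residue_part_plus_divisible_part add_diff_cancel_right')
  ultimately show ?thesis
    using assms(1) by (auto simp: divisible_partitions_def residue_partitions_def
        is_residue_part_residue_part is_divisible_part_divisible_part)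
qed

lemma card_partitions_divisible_part:
  assumes "2 \<le> m"
  shows "card {f \<in> partitions n. P (divisible_part m f)} =
    (\<Sum>r\<le>n. card {g \<in> divisible_partitions m r. P g} * card (residue_partitions m (n - r)))"
proof -
  define T where "T = (SIGMA r:{..n}. {g \<in> divisible_partitions m r. P g} \<times> residue_partitions m (n - r))"
  define join :: "nat \<times> (nat \<Rightarrow> nat) \<times> (nat \<Rightarrow> nat) \<Rightarrow> nat \<Rightarrow> nat"
    where "join = (\<lambda>(r, g, u). u + g)"
  have "inj_on join T"
  proof (rule inj_onI)
    fix x x' assume "x \<in> T" "x' \<in> T" "join x = join x'"
    moreover obtain r g u r' g' u' where "x = (r, g, u)" and "x' = (r', g', u')"
      using prod_cases3 by metis
    ultimately show "x = x'"
      using residue_divisible_decomposition_unique[of m u g u' g'] partitions_unique[of g r r']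
      by (auto simp: T_def join_def divisible_partitions_def residue_partitions_def)
  qed
  moreover have "join ` T = {f \<in> partitions n. P (divisible_part m f)}"
  proof (intro equalityI subsetI)
    fix f assume "f \<in> join ` T"
    then obtain r g u where r: "r \<le> n" and f: "f = u + g" and g: "g \<in> partitions r"
      "is_divisible_part m g" "P g" and u: "u \<in> partitions (n - r)" "is_residue_part m u"
      by (auto simp: T_def join_def divisible_partitions_def residue_partitions_def)
    have "f \<in> partitions (n - r + r)"
      unfolding f using u(1) g(1) by (rule partitions_add)
    with r f g u show "f \<in> {f \<in> partitions n. P (divisible_part m f)}"
      by (simp add: divisible_part_add)
  next
    fix f assume "f \<in> {f \<in> partitions n. P (divisible_part m f)}"
    then obtain r where "r \<le> n" "divisible_part m f \<in> divisible_partitions m r"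
      "residue_part m f \<in> residue_partitions m (n - r)" "P (divisible_part m f)"
      using partitions_decompose[OF assms] by blast
    then have "join (r, divisible_part m f, residue_part m f) \<in> join ` T"
      by (simp add: T_def)
    then show "f \<in> join ` T"
      by (simp add: join_def residue_part_plus_divisible_part)
  qed
  ultimately have "card {f \<in> partitions n. P (divisible_part m f)} = card T"
    by (metis card_image)
  also have "\<dots> = (\<Sum>r\<le>n. card {g \<in> divisible_partitions m r. P g} * card (residue_partitions m (n - r)))"
    unfolding T_def using finite_partitions
    by (simp add: card_cartesian_product divisible_partitions_def residue_partitions_def)
  finally show ?thesis .
qed

lemma divisible_partitions_eq_empty:
  assumes "\<not> m dvd r"
  shows "divisible_partitions m r = {}"
proof (rule ccontr)
  assume "divisible_partitions m r \<noteq> {}"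
  then obtain g where g: "g \<in> partitions r" "is_divisible_part m g"
    unfolding divisible_partitions_def by auto
  have "m dvd i * g i" for i
    using g(2) by (cases "m dvd i") (auto simp: is_divisible_part_def)
  then have "m dvd (\<Sum>i=1..r. i * g i)"
    by (simp add: dvd_sum)
  with sum_partitions_extend[OF g(1) order_refl] assms show False
    by simp
qed

lemma divisible_partitions_0: "divisible_partitions m 0 = {0}"
  by (auto simp: divisible_partitions_def partitions_0 is_divisible_part_def)

lemma p_eq_sum_divisible_residue:
  "2 \<le> m \<Longrightarrow>
    p n = (\<Sum>r\<le>n. card (divisible_partitions m r) * card (residue_partitions m (n - r)))"
  using card_partitions_divisible_part[of m n "\<lambda>_. True"] by (simp add: p_def)

lemma p_rho_eq_sum_divisible_residue:
  assumes "2 \<le> m"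
  shows "p_rho m n k = (\<Sum>r\<le>n. card {g \<in> divisible_partitions m r. orbit_size m g = k}
    * card (residue_partitions m (n - r)))"
proof -
  have "{f \<in> partitions n. orbit_size m f = k} = {f \<in> partitions n. orbit_size m (divisible_part m f) = k}"
    using orbit_size_divisible_part[OF assms partitions_eventually_zero] by auto
  then show ?thesis
    unfolding p_rho_def using card_partitions_divisible_part[OF assms] by simp
qed

lemma dvd_le_affine_cases:
  fixes A B n r :: nat
  assumes "A dvd r" and "r \<le> A * n + B" and "B < A"
  obtains t where "t \<le> n" and "r = A * t" and "A * n + B - r = A * (n - t) + B"
proof -
  obtain t where t: "r = A * t" using assms(1) ..
  have "t \<le> n"
  proof (rule ccontr)
    assume "\<not> t \<le> n"
    then have "A * Suc n \<le> A * t" by (intro mult_le_mono2) simp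
    with assms(2,3) t show False by simp
  qed
  moreover have "A * n = A * (n - t) + A * t"
    using \<open>t \<le> n\<close> by (simp add: diff_mult_distrib2)
  ultimately show ?thesis
    using t that by simp
qed

lemma dvd_card_residue_partitions:
  fixes m A B C :: nat
  assumes m: "2 \<le> m" and "A dvd m" and "B < A" and p: "\<forall>n. C dvd p (A * n + B)"
  shows "C dvd card (residue_partitions m (A * n + B))"
proof (induction n rule: less_induct)
  case (less n)
  define N where "N = A * n + B"
  have "C dvd card (divisible_partitions m r) * card (residue_partitions m (N - r))"
    if r: "r \<in> {1..N}" for r
  proof (cases "m dvd r")
    case True
    with \<open>A dvd m\<close> have "A dvd r" by (rule dvd_trans)
    then obtain t where "t \<le> n" "r = A * t" and N_r: "N - r = A * (n - t) + B"
      using dvd_le_affine_cases[of A r n B] r assms(3) unfolding N_def by auto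
    with r have "n - t < n" by auto
    then show ?thesis using less N_r by simp
  qed (simp add: divisible_partitions_eq_empty)
  then have rest: "C dvd (\<Sum>r\<in>{1..N}. card (divisible_partitions m r) * card (residue_partitions m (N - r)))"
    by (rule dvd_sum)
  have "p N = card (residue_partitions m N)
      + (\<Sum>r\<in>{1..N}. card (divisible_partitions m r) * card (residue_partitions m (N - r)))"
    unfolding p_eq_sum_divisible_residue[OF m] atMost_atLeast0
    by (simp add: sum.atLeast_Suc_atMost divisible_partitions_0)
  moreover have "C dvd p N"
    using p unfolding N_def by simp
  ultimately have "C dvd card (residue_partitions m N)"
    using dvd_add_left_iff[OF rest] by simp
  then show ?case
    unfolding N_def .
qed

theorem theorem1:
  fixes m A B C :: nat
  assumes "m \<ge> 2" and "A \<ge> 1" and "C \<ge> 1"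
    and "\<forall>n. C dvd p (A * n + B)"
    and "B < A" and "A dvd m"
  shows "\<forall>k n. k > 0 \<longrightarrow> C dvd p_rho m (A * n + B) k"
proof (intro allI impI)
  fix k n :: nat
  have "C dvd card {g \<in> divisible_partitions m r. orbit_size m g = k}
      * card (residue_partitions m (A * n + B - r))" if r: "r \<le> A * n + B" for r
  proof (cases "m dvd r")
    case True
    with \<open>A dvd m\<close> have "A dvd r" by (rule dvd_trans)
    then obtain t where "A * n + B - r = A * (n - t) + B"
      using dvd_le_affine_cases[of A r n B] r \<open>B < A\<close> by blast
    then show ?thesis
      using dvd_card_residue_partitions[OF \<open>m \<ge> 2\<close> \<open>A dvd m\<close> \<open>B < A\<close> assms(4)] by simp
  qed (simp add: divisible_partitions_eq_empty)
  then show "C dvd p_rho m (A * n + B) k"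
    unfolding p_rho_eq_sum_divisible_residue[OF \<open>m \<ge> 2\<close>] by (intro dvd_sum) simp
qed

end
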